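(* Assume $\mathbf a,\mathbf b\in\Delta^n$ with strictly positive entries, let $\eta>0$, let $X^\eta$ be the unique minimizer of $g_\eta$ over $\mathbb{R}^{n\times n}_+$, and set $\gamma=\|C\|_\infty+2\eta$. Then for all $i,j\in[n]$: $$a_ie^{-\gamma/\tau}\le\sum_{k=1}^nX^\eta_{ik}\le1-e^{-\gamma/\tau}(1-a_i),\qquad b_je^{-\gamma/\tau}\le\sum_{k=1}^nX^\eta_{kj}\le1-e^{-\gamma/\tau}(1-b_j).$$
   Context: Let $n\ge1$, $C\in\mathbb{R}^{n\times n}$ with nonnegative entries and $\|C\|_\infty=\max_{i,j}|C_{ij}|$; $\tau>0$; $\Delta^n=\{\mathbf x\in\mathbb{R}^n_+:\sum_i x_i=1\}$. For $\mathbf x\in\mathbb{R}^n_+$ and $\mathbf y$ with positive entries, $\mathbf{KL}(\mathbf x\|\mathbf y)=\sum_i x_i\log(x_i/y_i)-x_i+y_i$ (with $0\log0=0$). $\|X\|_2$ is the Frobenius norm, $\mathbf 1_n$ the all-ones vector. $g_\eta(X)=\langle C,X\rangle+\eta\|X\|_2^2+\tau\mathbf{KL}(X\mathbf 1_n\|\mathbf a)+\tau\mathbf{KL}(X^\top\mathbf 1_n\|\mathbf b)$ for $X\in\mathbb{R}^{n\times n}_+$. *)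

theory Defs
  imports "HOL-Analysis.Analysis"
begin

text \<open>Vectors in R^n are real^'n, n x n matrices are real^'n^'n (entry X$i$j),
 with 'n an arbitrary finite index type (n = CARD('n) >= 1).\<close>

definition KL :: "real^'n \<Rightarrow> real^'n \<Rightarrow> real" where
  "KL x y = (\<Sum>i\<in>UNIV. (if x$i = 0 then 0 else x$i * ln (x$i / y$i)) - x$i + y$i)"

definition row_sums :: "real^'n^'n \<Rightarrow> real^'n" where
  "row_sums X = (\<chi> i. \<Sum>k\<in>UNIV. X$i$k)"

definition col_sums :: "real^'n^'n \<Rightarrow> real^'n" where
  "col_sums X = (\<chi> j. \<Sum>k\<in>UNIV. X$k$j)"

definition frob_sq :: "real^'n^'n \<Rightarrow> real" where
  "frob_sq X = (\<Sum>i\<in>UNIV. \<Sum>j\<in>UNIV. (X$i$j)^2)"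

definition frob_inner :: "real^'n^'n \<Rightarrow> real^'n^'n \<Rightarrow> real" where
  "frob_inner C X = (\<Sum>i\<in>UNIV. \<Sum>j\<in>UNIV. C$i$j * X$i$j)"

definition max_abs :: "real^'n^'n \<Rightarrow> real" where
  "max_abs C = Max {\<bar>C$i$j\<bar> | i j. True}"

definition nonneg_mat :: "real^'n^'n \<Rightarrow> bool" where
  "nonneg_mat X \<longleftrightarrow> (\<forall>i j. X$i$j \<ge> 0)"

definition g_eta :: "real^'n^'n \<Rightarrow> real \<Rightarrow> real \<Rightarrow> real^'n \<Rightarrow> real^'n \<Rightarrow> real^'n^'n \<Rightarrow> real" where
  "g_eta C \<tau> \<eta> a b X = frob_inner C X + \<eta> * frob_sq X
     + \<tau> * KL (row_sums X) a + \<tau> * KL (col_sums X) b"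

definition prob_simplex :: "(real^'n) set" where
  "prob_simplex = {x. (\<forall>i. x$i \<ge> 0) \<and> (\<Sum>i\<in>UNIV. x$i) = 1}"

end

theory Submission
  imports Defs
begin

text \<open>
  Perturbing the minimiser X in the direction of the unit matrix E_ij and letting the step go to 0
  yields the first-order condition
  0 \<le> C_ij + 2\<eta> X_ij + \<tau> ln (r_i / a_i) + \<tau> ln (c_j / b_j)
  for the row sums r and column sums c of X. Shrinking X shows that its total mass is at most 1,
  so X_ij \<le> 1 and some column has c_j \<le> b_j. For that column the last logarithm is nonpositive,
  whence \<tau> ln (r_i / a_i) \<ge> -\<gamma>; symmetrically for column sums. The upper bounds follow
  from the lower bounds on all other marginal entries, again because the total mass is at most 1.
\<close>

definition rel_entr :: "real \<Rightarrow> real \<Rightarrow> real" where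
  "rel_entr x y = (if x = 0 then 0 else x * ln (x / y))"

definition kl_term :: "real \<Rightarrow> real \<Rightarrow> real" where
  "kl_term x y = rel_entr x y - x + y"

lemma KL_eq_sum_kl_term: "KL x y = (\<Sum>i\<in>UNIV. kl_term (x$i) (y$i))"
  by (simp add: KL_def kl_term_def rel_entr_def)

lemma kl_term_add_le:
  assumes "x \<ge> 0" "t > 0" "y > 0"
  shows "kl_term (x + t) y - kl_term x y \<le> t * ln ((x + t) / y)"
proof (cases "x = 0")
  case True
  then show ?thesis using assms by (simp add: kl_term_def rel_entr_def)
next
  case False
  then have x: "x > 0" using assms by simp
  have "ln ((x + t) / x) \<le> (x + t) / x - 1"
    using x assms by (intro ln_le_minus_one) simp
  then have "x * (ln (x + t) - ln x) \<le> t"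
    using x assms by (simp add: ln_div field_simps)
  moreover have "kl_term (x + t) y - kl_term x y
      = x * (ln (x + t) - ln x) + t * ln ((x + t) / y) - t"
    using x assms by (simp add: kl_term_def rel_entr_def ln_div algebra_simps)
  ultimately show ?thesis by simp
qed

lemma kl_term_scale_le:
  assumes "x \<ge> 0" "0 < s" "s < 1" "y > 0"
  shows "kl_term (s * x) y - kl_term x y \<le> - (1 - s) * rel_entr x y + (1 - s)\<^sup>2 * x"
proof (cases "x = 0")
  case True
  then show ?thesis using assms by (simp add: kl_term_def rel_entr_def)
next
  case False
  then have x: "x > 0" using assms by simp
  have "s * ln s \<le> s * (s - 1)"
    using assms ln_le_minus_one[of s] by (intro mult_left_mono) auto
  then have "x * (s * ln s + (1 - s)) \<le> x * (1 - s)\<^sup>2"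
    using x by (intro mult_left_mono) (auto simp: power2_eq_square algebra_simps)
  moreover have "kl_term (s * x) y - kl_term x y = - (1 - s) * rel_entr x y + x * (s * ln s + (1 - s))"
    using x assms by (simp add: kl_term_def rel_entr_def ln_div ln_mult algebra_simps)
  ultimately show ?thesis by (simp add: mult.commute)
qed

lemma log_sum_inequality:
  assumes "finite I" "\<And>i. i \<in> I \<Longrightarrow> x i \<ge> 0" "\<And>i. i \<in> I \<Longrightarrow> y i > 0"
    and "sum y I = 1" "sum x I = m" "m > 0"
  shows "m * ln m \<le> (\<Sum>i\<in>I. rel_entr (x i) (y i))"
proof -
  have term_ge: "x i * ln m + x i - m * y i \<le> rel_entr (x i) (y i)" if i: "i \<in> I" for i
  proof (cases "x i = 0")
    case True
    then show ?thesis using assms i by (simp add: rel_entr_def less_imp_le)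
  next
    case False
    then have xi: "x i > 0" and yi: "y i > 0" using assms i by (auto simp: order_le_less)
    have "x i * ln (m * y i / x i) \<le> x i * (m * y i / x i - 1)"
      using xi yi assms ln_le_minus_one[of "m * y i / x i"] by (intro mult_left_mono) auto
    also have "\<dots> = m * y i - x i" using xi by (simp add: field_simps)
    finally have "x i * (ln m + ln (y i) - ln (x i)) \<le> m * y i - x i"
      using xi yi assms by (simp add: ln_div ln_mult)
    then show ?thesis
      using xi yi by (simp add: rel_entr_def ln_div algebra_simps)
  qed
  have "m * ln m = (\<Sum>i\<in>I. x i * ln m + x i - m * y i)"
    using assms by (simp add: sum.distrib sum_subtractf sum_distrib_left[symmetric]
        sum_distrib_right[symmetric])
  also have "\<dots> \<le> (\<Sum>i\<in>I. rel_entr (x i) (y i))"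
    by (rule sum_mono) (rule term_ge)
  finally show ?thesis .
qed

lemma KL_update_entry:
  assumes "\<And>k. k \<noteq> i \<Longrightarrow> x' $ k = x $ k"
  shows "KL x' y - KL x y = kl_term (x' $ i) (y $ i) - kl_term (x $ i) (y $ i)"
proof -
  have "(\<Sum>k\<in>UNIV - {i}. kl_term (x' $ k) (y $ k)) = (\<Sum>k\<in>UNIV - {i}. kl_term (x $ k) (y $ k))"
    using assms by (intro sum.cong) auto
  then show ?thesis
    unfolding KL_eq_sum_kl_term by (simp add: sum.remove[of UNIV i])
qed

lemma KL_scaleR_le:
  fixes x y :: "real^'n"
  assumes "\<forall>i. x$i \<ge> 0" "\<forall>i. y$i > 0" "(\<Sum>i\<in>UNIV. y$i) = 1"
    and "(\<Sum>i\<in>UNIV. x$i) = m" "m > 0" "0 < s" "s < 1"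
  shows "KL (s *\<^sub>R x) y - KL x y \<le> (1 - s) * m * ((1 - s) - ln m)"
proof -
  have "KL (s *\<^sub>R x) y - KL x y = (\<Sum>i\<in>UNIV. kl_term (s * x$i) (y$i) - kl_term (x$i) (y$i))"
    unfolding KL_eq_sum_kl_term by (simp add: sum_subtractf)
  also have "\<dots> \<le> (\<Sum>i\<in>UNIV. - (1 - s) * rel_entr (x$i) (y$i) + (1 - s)\<^sup>2 * x$i)"
    using assms by (intro sum_mono kl_term_scale_le) auto
  also have "\<dots> = - (1 - s) * (\<Sum>i\<in>UNIV. rel_entr (x$i) (y$i)) + (1 - s)\<^sup>2 * m"
    using assms by (simp add: sum.distrib sum_distrib_left[symmetric])
  also have "\<dots> \<le> - (1 - s) * (m * ln m) + (1 - s)\<^sup>2 * m"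
    using assms log_sum_inequality[of UNIV "\<lambda>i. x$i" "\<lambda>i. y$i" m] by simp
  finally show ?thesis by (simp add: power2_eq_square algebra_simps)
qed

lemma max_abs_ge: "C$i$j \<le> max_abs (C :: real^'n^'n)"
proof -
  have "finite {\<bar>C$i$j\<bar> | i j. True}"
    using finite_imageI[of UNIV "\<lambda>(i, j). \<bar>C$i$j\<bar>"] by (simp add: image_def)
  then have "\<bar>C$i$j\<bar> \<le> max_abs C" unfolding max_abs_def by (rule Max_ge) auto
  then show ?thesis by simp
qed

lemma sum_le_imp_ex_le:
  fixes x y :: "'a \<Rightarrow> real"
  assumes "finite I" "I \<noteq> {}" "sum x I \<le> sum y I"
  obtains i where "i \<in> I" "x i \<le> y i"
  using sum_strict_mono[of I y x] assms by force

lemma le_one_minus_others: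
  fixes x a :: "'a \<Rightarrow> real"
  assumes "finite I" "i \<in> I" "\<And>k. k \<in> I \<Longrightarrow> a k * e \<le> x k" "sum x I \<le> 1" "sum a I = 1"
  shows "x i \<le> 1 - e * (1 - a i)"
proof -
  have "e * (1 - a i) = (\<Sum>k\<in>I - {i}. a k * e)"
    using assms by (simp add: sum_distrib_right[symmetric] sum_diff1)
  also have "\<dots> \<le> (\<Sum>k\<in>I - {i}. x k)"
    using assms by (intro sum_mono) auto
  also have "\<dots> = sum x I - x i"
    using assms by (simp add: sum_diff1)
  finally show ?thesis using assms by simp
qed

lemma lower_bound_of_ln_perturbation:
  fixes K \<eta> \<tau> u v \<alpha> \<beta> :: real
  assumes H: "\<forall>t>0. 0 \<le> K + \<eta> * t + \<tau> * ln ((u + t) / \<alpha>) + \<tau> * ln ((v + t) / \<beta>)"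
    and "0 \<le> v" "v \<le> \<beta>" "\<beta> > 0" "\<alpha> > 0" "u \<ge> 0" "\<tau> > 0"
  shows "\<alpha> * exp (- K / \<tau>) \<le> u"
proof -
  define f where "f t = \<alpha> * exp ((- K - \<eta> * t - \<tau> * ln ((\<beta> + t) / \<beta>)) / \<tau>)" for t
  have eventually_le: "eventually (\<lambda>t. f t \<le> u + t) (at_right 0)"
  proof (rule eventually_at_rightI[where b = 1])
    fix t :: real
    assume "t \<in> {0<..<1}"
    then have t: "t > 0" by simp
    text \<open>v \<le> \<beta> lets us replace the unknown v by \<beta>, which removes v from the bound.\<close>
    have "ln ((v + t) / \<beta>) \<le> ln ((\<beta> + t) / \<beta>)"
      using assms t by (subst ln_le_cancel_iff) (auto simp: divide_right_mono)
    then have "\<tau> * ln ((v + t) / \<beta>) \<le> \<tau> * ln ((\<beta> + t) / \<beta>)"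
      using assms by (intro mult_left_mono) auto
    moreover have "0 \<le> K + \<eta> * t + \<tau> * ln ((u + t) / \<alpha>) + \<tau> * ln ((v + t) / \<beta>)"
      using H t by blast
    ultimately have "0 \<le> K + \<eta> * t + \<tau> * ln ((u + t) / \<alpha>) + \<tau> * ln ((\<beta> + t) / \<beta>)"
      by linarith
    then have "(- K - \<eta> * t - \<tau> * ln ((\<beta> + t) / \<beta>)) / \<tau> \<le> ln ((u + t) / \<alpha>)"
      using assms by (simp add: field_simps)
    then have "exp ((- K - \<eta> * t - \<tau> * ln ((\<beta> + t) / \<beta>)) / \<tau>) \<le> (u + t) / \<alpha>"
      using assms t by (metis exp_le_cancel_iff exp_ln add_nonneg_pos divide_pos_pos)
    then show "f t \<le> u + t" using assms unfolding f_def by (simp add: field_simps)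
  qed simp
  have lim_f: "(f \<longlongrightarrow> \<alpha> * exp (- K / \<tau>)) (at_right 0)"
  proof -
    have "(f \<longlongrightarrow> \<alpha> * exp ((- K - \<eta> * 0 - \<tau> * ln ((\<beta> + 0) / \<beta>)) / \<tau>)) (at_right 0)"
      unfolding f_def using assms by (intro tendsto_intros) auto
    then show ?thesis using assms by simp
  qed
  have "((\<lambda>t. u + t) \<longlongrightarrow> u + 0) (at_right 0)" by (intro tendsto_intros)
  from tendsto_le[OF _ this lim_f eventually_le] show ?thesis by simp
qed

definition is_g_eta_minimizer :: "real^'n^'n \<Rightarrow> real \<Rightarrow> real \<Rightarrow> real^'n \<Rightarrow> real^'n \<Rightarrow> real^'n^'n \<Rightarrow> bool"
  where "is_g_eta_minimizer C \<tau> \<eta> a b X \<longleftrightarrow>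
    nonneg_mat X \<and> (\<forall>Y. nonneg_mat Y \<longrightarrow> g_eta C \<tau> \<eta> a b X \<le> g_eta C \<tau> \<eta> a b Y)"

lemma sum_row_sums_eq_sum_col_sums: "(\<Sum>i\<in>UNIV. row_sums X $ i) = (\<Sum>j\<in>UNIV. col_sums X $ j)"
  unfolding row_sums_def col_sums_def vec_lambda_beta by (rule sum.swap)

lemma row_sums_nonneg: "nonneg_mat X \<Longrightarrow> row_sums X $ i \<ge> 0"
  unfolding nonneg_mat_def row_sums_def by (simp add: sum_nonneg)

lemma col_sums_nonneg: "nonneg_mat X \<Longrightarrow> col_sums X $ j \<ge> 0"
  unfolding nonneg_mat_def col_sums_def by (simp add: sum_nonneg)

lemma entry_le_sum_row_sums:
  assumes "nonneg_mat X"
  shows "X$i$j \<le> (\<Sum>k\<in>UNIV. row_sums X $ k)"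
proof -
  have "X$i$j \<le> row_sums X $ i"
    using assms unfolding nonneg_mat_def row_sums_def by (simp add: member_le_sum)
  also have "\<dots> \<le> (\<Sum>k\<in>UNIV. row_sums X $ k)"
    using assms row_sums_nonneg by (intro member_le_sum) auto
  finally show ?thesis .
qed

lemma g_eta_scaleR_le:
  fixes C X :: "real^'n^'n"
  assumes "\<forall>i j. C$i$j \<ge> 0" "\<tau> > 0" "\<eta> \<ge> 0"
    and "a \<in> prob_simplex" "\<forall>i. a$i > 0" "b \<in> prob_simplex" "\<forall>j. b$j > 0"
    and "nonneg_mat X" "(\<Sum>i\<in>UNIV. row_sums X $ i) = m" "m > 0" "0 < s" "s < 1"
  shows "g_eta C \<tau> \<eta> a b (s *\<^sub>R X) - g_eta C \<tau> \<eta> a b X \<le> 2 * \<tau> * (1 - s) * m * ((1 - s) - ln m)"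
proof -
  have X: "X$i$j \<ge> 0" for i j using assms unfolding nonneg_mat_def by auto
  have inner: "frob_inner C (s *\<^sub>R X) \<le> frob_inner C X"
    using assms X unfolding frob_inner_def
    by (intro sum_mono) (auto intro!: mult_left_mono mult_left_le_one_le)
  have "frob_sq (s *\<^sub>R X) \<le> frob_sq X"
    using assms unfolding frob_sq_def
    by (intro sum_mono) (auto simp: power_mult_distrib intro!: mult_left_le_one_le power_le_one)
  then have sq: "\<eta> * frob_sq (s *\<^sub>R X) \<le> \<eta> * frob_sq X"
    using assms by (intro mult_left_mono) auto
  have "row_sums (s *\<^sub>R X) = s *\<^sub>R row_sums X" "col_sums (s *\<^sub>R X) = s *\<^sub>R col_sums X"
    unfolding row_sums_def col_sums_def by (simp_all add: vec_eq_iff sum_distrib_left)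
  moreover have "KL (s *\<^sub>R row_sums X) a - KL (row_sums X) a \<le> (1 - s) * m * ((1 - s) - ln m)"
    using assms row_sums_nonneg by (intro KL_scaleR_le) (auto simp: prob_simplex_def)
  moreover have "KL (s *\<^sub>R col_sums X) b - KL (col_sums X) b \<le> (1 - s) * m * ((1 - s) - ln m)"
    using assms col_sums_nonneg sum_row_sums_eq_sum_col_sums[of X]
    by (intro KL_scaleR_le) (auto simp: prob_simplex_def)
  ultimately have
    "\<tau> * KL (row_sums (s *\<^sub>R X)) a - \<tau> * KL (row_sums X) a \<le> \<tau> * ((1 - s) * m * ((1 - s) - ln m))"
    "\<tau> * KL (col_sums (s *\<^sub>R X)) b - \<tau> * KL (col_sums X) b \<le> \<tau> * ((1 - s) * m * ((1 - s) - ln m))"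
    using assms by (simp_all add: right_diff_distrib[symmetric])
  with inner sq show ?thesis
    unfolding g_eta_def by (simp add: algebra_simps)
qed

lemma minimizer_mass_le_one:
  fixes C X :: "real^'n^'n"
  assumes "\<forall>i j. C$i$j \<ge> 0" "\<tau> > 0" "\<eta> \<ge> 0"
    and "a \<in> prob_simplex" "\<forall>i. a$i > 0" "b \<in> prob_simplex" "\<forall>j. b$j > 0"
    and "is_g_eta_minimizer C \<tau> \<eta> a b X"
  shows "(\<Sum>i\<in>UNIV. row_sums X $ i) \<le> 1"
proof (rule ccontr)
  define m where "m = (\<Sum>i\<in>UNIV. row_sums X $ i)"
  assume "\<not> ?thesis"
  then have "m > 1" unfolding m_def by simp
  then have "ln m > 0" by simp
  text \<open>Shrinking X by a factor 1 - \<delta> with 0 < \<delta> < ln m strictly decreases g.\<close>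
  define \<delta> where "\<delta> = min (1/2) (ln m / 2)"
  have \<delta>: "0 < \<delta>" "\<delta> < 1" "\<delta> < ln m" using \<open>ln m > 0\<close> unfolding \<delta>_def by auto
  have X: "nonneg_mat X" using assms unfolding is_g_eta_minimizer_def by simp
  then have "nonneg_mat ((1 - \<delta>) *\<^sub>R X)" using \<delta> unfolding nonneg_mat_def by simp
  then have "g_eta C \<tau> \<eta> a b X \<le> g_eta C \<tau> \<eta> a b ((1 - \<delta>) *\<^sub>R X)"
    using assms unfolding is_g_eta_minimizer_def by blast
  moreover have "g_eta C \<tau> \<eta> a b ((1 - \<delta>) *\<^sub>R X) - g_eta C \<tau> \<eta> a b X \<le> 2 * \<tau> * \<delta> * m * (\<delta> - ln m)"
    using g_eta_scaleR_le[OF assms(1-7) X m_def[symmetric], of "1 - \<delta>"] \<delta> \<open>m > 1\<close> by simp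
  moreover have "2 * \<tau> * \<delta> * m * (\<delta> - ln m) < 0"
    using assms \<delta> \<open>m > 1\<close> by (simp add: mult_pos_neg)
  ultimately show False by linarith
qed

definition unit_mat :: "'n \<Rightarrow> 'n \<Rightarrow> real^'n^'n" where
  "unit_mat i j = (\<chi> k l. of_bool (k = i \<and> l = j))"

lemma sum_sum_mult_of_bool_eq:
  fixes i :: "'i::finite" and j :: "'j::finite"
  shows "(\<Sum>k\<in>UNIV. \<Sum>l\<in>UNIV. f k l * of_bool (k = i \<and> l = j)) = (f i j :: 'a::comm_semiring_1)"
proof -
  have "(\<Sum>l\<in>UNIV. f k l * of_bool (k = i \<and> l = j)) = f k j * of_bool (k = i)" for k
    by (cases "k = i") simp_all
  then show ?thesis by simp
qed

lemma row_sums_add_unit_mat: "row_sums (X + t *\<^sub>R unit_mat i j) $ k = row_sums X $ k + t * of_bool (k = i)"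
  unfolding row_sums_def unit_mat_def by (simp add: sum.distrib)

lemma col_sums_add_unit_mat: "col_sums (X + t *\<^sub>R unit_mat i j) $ l = col_sums X $ l + t * of_bool (l = j)"
  unfolding col_sums_def unit_mat_def by (simp add: sum.distrib)

lemma frob_inner_add_unit_mat: "frob_inner C (X + t *\<^sub>R unit_mat i j) = frob_inner C X + t * C$i$j"
  unfolding frob_inner_def unit_mat_def
  using sum_sum_mult_of_bool_eq[of "\<lambda>k l. t * C$k$l" i j]
  by (simp add: sum.distrib algebra_simps)

lemma frob_sq_add_unit_mat: "frob_sq (X + t *\<^sub>R unit_mat i j) = frob_sq X + 2 * t * X$i$j + t\<^sup>2"
proof -
  have "(X$k$l + t * of_bool (k = i \<and> l = j))\<^sup>2
      = (X$k$l)\<^sup>2 + (2 * t * X$k$l + t\<^sup>2) * of_bool (k = i \<and> l = j)" for k l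
    by (simp add: power2_eq_square algebra_simps)
  then show ?thesis
    unfolding frob_sq_def unit_mat_def
    using sum_sum_mult_of_bool_eq[of "\<lambda>k l. 2 * t * X$k$l + t\<^sup>2" i j]
    by (simp add: sum.distrib)
qed

lemma g_eta_add_unit_mat_le:
  fixes C X :: "real^'n^'n"
  assumes "\<tau> > 0" "\<forall>i. a$i > 0" "\<forall>j. b$j > 0" "nonneg_mat X" "t > 0"
  shows "g_eta C \<tau> \<eta> a b (X + t *\<^sub>R unit_mat i j) - g_eta C \<tau> \<eta> a b X
    \<le> t * (C$i$j + 2 * \<eta> * X$i$j + \<eta> * t
           + \<tau> * ln ((row_sums X $ i + t) / a$i) + \<tau> * ln ((col_sums X $ j + t) / b$j))"
proof -
  have "KL (row_sums (X + t *\<^sub>R unit_mat i j)) a - KL (row_sums X) a \<le> t * ln ((row_sums X $ i + t) / a$i)"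
    using assms row_sums_nonneg[of X i]
    by (simp add: KL_update_entry[where i = i] row_sums_add_unit_mat kl_term_add_le)
  moreover have "KL (col_sums (X + t *\<^sub>R unit_mat i j)) b - KL (col_sums X) b \<le> t * ln ((col_sums X $ j + t) / b$j)"
    using assms col_sums_nonneg[of X j]
    by (simp add: KL_update_entry[where i = j] col_sums_add_unit_mat kl_term_add_le)
  ultimately have
    "\<tau> * KL (row_sums (X + t *\<^sub>R unit_mat i j)) a - \<tau> * KL (row_sums X) a \<le> \<tau> * (t * ln ((row_sums X $ i + t) / a$i))"
    "\<tau> * KL (col_sums (X + t *\<^sub>R unit_mat i j)) b - \<tau> * KL (col_sums X) b \<le> \<tau> * (t * ln ((col_sums X $ j + t) / b$j))"
    using assms by (simp_all add: right_diff_distrib[symmetric])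
  then show ?thesis
    unfolding g_eta_def frob_inner_add_unit_mat frob_sq_add_unit_mat
    by (simp add: power2_eq_square algebra_simps)
qed

lemma minimizer_first_order:
  fixes C X :: "real^'n^'n"
  assumes "\<tau> > 0" "\<forall>i. a$i > 0" "\<forall>j. b$j > 0" "is_g_eta_minimizer C \<tau> \<eta> a b X" "t > 0"
  shows "0 \<le> C$i$j + 2 * \<eta> * X$i$j + \<eta> * t
           + \<tau> * ln ((row_sums X $ i + t) / a$i) + \<tau> * ln ((col_sums X $ j + t) / b$j)"
proof -
  have X: "nonneg_mat X" using assms unfolding is_g_eta_minimizer_def by simp
  then have "nonneg_mat (X + t *\<^sub>R unit_mat i j)"
    using assms unfolding nonneg_mat_def unit_mat_def by simp
  then have "0 \<le> g_eta C \<tau> \<eta> a b (X + t *\<^sub>R unit_mat i j) - g_eta C \<tau> \<eta> a b X"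
    using assms unfolding is_g_eta_minimizer_def by simp
  then have "0 \<le> t * (C$i$j + 2 * \<eta> * X$i$j + \<eta> * t
           + \<tau> * ln ((row_sums X $ i + t) / a$i) + \<tau> * ln ((col_sums X $ j + t) / b$j))"
    using g_eta_add_unit_mat_le[OF assms(1-3) X assms(5), of C \<eta> i j] by linarith
  then show ?thesis using assms by (simp add: zero_le_mult_iff)
qed

lemma minimizer_marginals_ge:
  fixes C X :: "real^'n^'n"
  assumes "\<forall>i j. C$i$j \<ge> 0" "\<tau> > 0" "\<eta> \<ge> 0"
    and a: "a \<in> prob_simplex" "\<forall>i. a$i > 0" and b: "b \<in> prob_simplex" "\<forall>j. b$j > 0"
    and min: "is_g_eta_minimizer C \<tau> \<eta> a b X"
  shows "a$i * exp (- (max_abs C + 2 * \<eta>) / \<tau>) \<le> row_sums X $ i"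
    and "b$j * exp (- (max_abs C + 2 * \<eta>) / \<tau>) \<le> col_sums X $ j"
proof -
  define \<gamma> where "\<gamma> = max_abs C + 2 * \<eta>"
  have X: "nonneg_mat X" using min unfolding is_g_eta_minimizer_def by simp
  have mass: "(\<Sum>k\<in>UNIV. row_sums X $ k) \<le> 1" "(\<Sum>k\<in>UNIV. col_sums X $ k) \<le> 1"
    using minimizer_mass_le_one[OF assms] sum_row_sums_eq_sum_col_sums[of X] by simp_all
  have K: "C$k$l + 2 * \<eta> * X$k$l \<le> \<gamma>" for k l
  proof -
    have "\<eta> * X$k$l \<le> \<eta> * 1"
      using entry_le_sum_row_sums[OF X, of k l] mass assms by (intro mult_left_mono) auto
    then show ?thesis using max_abs_ge[of C k l] unfolding \<gamma>_def by linarith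
  qed
  have bound: "\<alpha> * exp (- \<gamma> / \<tau>) \<le> u"
    if "\<forall>t>0. 0 \<le> K + \<eta> * t + \<tau> * ln ((u + t) / \<alpha>) + \<tau> * ln ((v + t) / \<beta>)"
      "K \<le> \<gamma>" "0 \<le> v" "v \<le> \<beta>" "\<beta> > 0" "\<alpha> > 0" "u \<ge> 0" for K u v \<alpha> \<beta>
  proof -
    have "\<alpha> * exp (- \<gamma> / \<tau>) \<le> \<alpha> * exp (- K / \<tau>)"
      using that assms by (auto intro!: mult_left_mono divide_right_mono)
    also have "\<dots> \<le> u" using lower_bound_of_ln_perturbation[of K \<eta> \<tau> u \<alpha> v \<beta>] that assms by blast
    finally show ?thesis .
  qed
  have simplex_sums: "(\<Sum>k\<in>UNIV. a$k) = 1" "(\<Sum>k\<in>UNIV. b$k) = 1"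
    using a b unfolding prob_simplex_def by simp_all
  obtain l where l: "col_sums X $ l \<le> b$l"
    using sum_le_imp_ex_le[of UNIV "\<lambda>k. col_sums X $ k" "\<lambda>k. b$k"] mass simplex_sums by auto
  show "a$i * exp (- (max_abs C + 2 * \<eta>) / \<tau>) \<le> row_sums X $ i"
    unfolding \<gamma>_def[symmetric]
  proof (rule bound[OF _ K[of i l] col_sums_nonneg[OF X]])
    show "\<forall>t>0. 0 \<le> C$i$l + 2 * \<eta> * X$i$l + \<eta> * t
        + \<tau> * ln ((row_sums X $ i + t) / a$i) + \<tau> * ln ((col_sums X $ l + t) / b$l)"
      using minimizer_first_order[OF assms(2) a(2) b(2) min] by blast
  qed (use l a b X row_sums_nonneg in auto)
  obtain k where k: "row_sums X $ k \<le> a$k"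
    using sum_le_imp_ex_le[of UNIV "\<lambda>k. row_sums X $ k" "\<lambda>k. a$k"] mass simplex_sums by auto
  show "b$j * exp (- (max_abs C + 2 * \<eta>) / \<tau>) \<le> col_sums X $ j"
    unfolding \<gamma>_def[symmetric]
  proof (rule bound[OF _ K[of k j] row_sums_nonneg[OF X]])
    show "\<forall>t>0. 0 \<le> C$k$j + 2 * \<eta> * X$k$j + \<eta> * t
        + \<tau> * ln ((col_sums X $ j + t) / b$j) + \<tau> * ln ((row_sums X $ k + t) / a$k)"
      using minimizer_first_order[OF assms(2) a(2) b(2) min] by (simp add: algebra_simps)
  qed (use k a b X col_sums_nonneg in auto)
qed

theorem mainTheorem11:
  fixes C X :: "real^'n^'n" and a b :: "real^'n" and \<tau> \<eta> :: real
  assumes C_nonneg: "\<forall>i j. C$i$j \<ge> 0"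
    and tau: "\<tau> > 0"
    and a: "a \<in> prob_simplex" "\<forall>i. a$i > 0"
    and b: "b \<in> prob_simplex" "\<forall>j. b$j > 0"
    and eta: "\<eta> > 0"
    and X_min: "nonneg_mat X" "\<forall>Y. nonneg_mat Y \<longrightarrow> g_eta C \<tau> \<eta> a b X \<le> g_eta C \<tau> \<eta> a b Y"
  shows "\<forall>i j.
     a$i * exp (-(max_abs C + 2*\<eta>)/\<tau>) \<le> (\<Sum>k\<in>UNIV. X$i$k) \<and>
     (\<Sum>k\<in>UNIV. X$i$k) \<le> 1 - exp (-(max_abs C + 2*\<eta>)/\<tau>) * (1 - a$i) \<and>
     b$j * exp (-(max_abs C + 2*\<eta>)/\<tau>) \<le> (\<Sum>k\<in>UNIV. X$k$j) \<and>
     (\<Sum>k\<in>UNIV. X$k$j) \<le> 1 - exp (-(max_abs C + 2*\<eta>)/\<tau>) * (1 - b$j)"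
proof -
  let ?e = "exp (-(max_abs C + 2*\<eta>)/\<tau>)"
  have min: "is_g_eta_minimizer C \<tau> \<eta> a b X"
    using X_min unfolding is_g_eta_minimizer_def by simp
  note lower = minimizer_marginals_ge[OF C_nonneg tau less_imp_le[OF eta] a b min]
  have mass: "(\<Sum>k\<in>UNIV. row_sums X $ k) \<le> 1" "(\<Sum>k\<in>UNIV. col_sums X $ k) \<le> 1"
    using minimizer_mass_le_one[OF C_nonneg tau less_imp_le[OF eta] a b min]
      sum_row_sums_eq_sum_col_sums[of X] by simp_all
  have simplex_sums: "(\<Sum>k\<in>UNIV. a$k) = 1" "(\<Sum>k\<in>UNIV. b$k) = 1"
    using a b unfolding prob_simplex_def by simp_all
  have upper: "row_sums X $ i \<le> 1 - ?e * (1 - a$i)" "col_sums X $ i \<le> 1 - ?e * (1 - b$i)" for i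
    using le_one_minus_others[where I = UNIV and x = "\<lambda>k. row_sums X $ k" and a = "\<lambda>k. a$k"]
      le_one_minus_others[where I = UNIV and x = "\<lambda>k. col_sums X $ k" and a = "\<lambda>k. b$k"]
      lower mass simplex_sums by simp_all
  show ?thesis
    using lower upper unfolding row_sums_def col_sums_def by simp
qed

end
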